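(* Let $k,n\in\mathbb N_{>0}$. There is a rational piecewise linear FNN $\mathfrak F$ of input and output dimension $1$ and size polynomial in $n$ and $k$ such that $$\Pr_{r\sim\mathcal U}\big(\mathfrak F(r)\in\{0,\dots,n-1\}\big)\ge1-2^{-k},$$ and for all $i\in\{0,\dots,n-1\}$, $$\frac{1-2^{-k}}{n}\le\Pr_{r\sim\mathcal U}\big(\mathfrak F(r)=i\big)\le\frac1n.$$ Furthermore, $\mathfrak F$ only uses $\mathrm{relu}$-activations.
   Context: $\mathcal U$ denotes the uniform distribution on $[0,1]$. An FNN has a finite dag skeleton $(V,E)$, activation functions $\mathfrak a_v$, weights $w_e$ and biases $b_v$; sources are inputs, sinks outputs; a non-input node computes $\mathfrak a_v(b_v+\sum_{uv\in E}w_{uv}\cdot\text{value}(u))$. $\mathrm{relu}(x)=\max\{0,x\}$. A dyadic rational is a rational with a power-of-two denominator. The FNN is rational piecewise linear if all weights and biases are dyadic rationals and all activations are continuous piecewise linear functions whose thresholds, slopes and constants (minimal representation) are dyadic. Its size is the maximum of its bitsize (total binary representation size of skeleton, weights, biases and activations) and its weight $|V|+|E|+\max_e|w_e|+\max_v|b_v|+\max_v(\lambda(\mathfrak a_v)+\mathfrak a_v(0))$, $\lambda(\mathfrak a_v)$ the least integer Lipschitz constant of $\mathfrak a_v$. *)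

theory Defs
  imports "HOL-Analysis.Analysis"
begin

text \<open>The skeleton is a finite dag whose nodes are natural numbers; acyclicity is
represented (w.l.o.g.) by requiring every edge to go from a smaller to a larger node
(a topological numbering).\<close>

record fnn =
  nodes  :: "nat set"
  edges  :: "(nat \<times> nat) set"
  act    :: "nat \<Rightarrow> real \<Rightarrow> real"
  weight :: "nat \<times> nat \<Rightarrow> real"
  bias   :: "nat \<Rightarrow> real"

definition fnn_wf :: "fnn \<Rightarrow> bool" where
  "fnn_wf N \<longleftrightarrow> finite (nodes N) \<and> edges N \<subseteq> nodes N \<times> nodes N
      \<and> (\<forall>(u,v) \<in> edges N. u < v)"

definition fnn_sources :: "fnn \<Rightarrow> nat set" where
  "fnn_sources N = {v \<in> nodes N. \<not> (\<exists>u. (u, v) \<in> edges N)}"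

definition fnn_sinks :: "fnn \<Rightarrow> nat set" where
  "fnn_sinks N = {v \<in> nodes N. \<not> (\<exists>w. (v, w) \<in> edges N)}"

definition fnn_noninput :: "fnn \<Rightarrow> nat set" where
  "fnn_noninput N = nodes N - fnn_sources N"

text \<open>Value of node v when every input node receives the value x
(used for networks of input dimension 1).\<close>
function fnn_val :: "fnn \<Rightarrow> real \<Rightarrow> nat \<Rightarrow> real" where
  "fnn_val N x v =
     (if v \<in> fnn_sources N then x
      else act N v (bias N v +
             (\<Sum>u\<in>{u. u < v \<and> (u, v) \<in> edges N}. weight N (u, v) * fnn_val N x u)))"
  by pat_completeness auto
termination by (relation "Wellfounded.measure (\<lambda>(N, x, v). v)") auto

definition fnn_in :: "fnn \<Rightarrow> nat" where
  "fnn_in N = (THE v. v \<in> fnn_sources N)"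

definition fnn_out :: "fnn \<Rightarrow> nat" where
  "fnn_out N = (THE v. v \<in> fnn_sinks N)"

definition fnn_fun :: "fnn \<Rightarrow> real \<Rightarrow> real" where
  "fnn_fun N x = fnn_val N x (fnn_out N)"

definition fnn_dim11 :: "fnn \<Rightarrow> bool" where
  "fnn_dim11 N \<longleftrightarrow> card (fnn_sources N) = 1 \<and> card (fnn_sinks N) = 1"

definition relu :: "real \<Rightarrow> real" where
  "relu x = max 0 x"

definition fnn_relu_only :: "fnn \<Rightarrow> bool" where
  "fnn_relu_only N \<longleftrightarrow> (\<forall>v \<in> fnn_noninput N. act N v = relu)"

definition dyadic :: "real \<Rightarrow> bool" where
  "dyadic q \<longleftrightarrow> (\<exists>(a::int) (e::nat). q = of_int a / 2 ^ e)"

text \<open>A (continuous) piecewise linear representation: strictly increasing thresholds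
ts and affine pieces ps = (slope, constant); piece i is used on [ts!(i-1), ts!i].\<close>
definition pwl_rep :: "(real \<Rightarrow> real) \<Rightarrow> real list \<Rightarrow> (real \<times> real) list \<Rightarrow> bool" where
  "pwl_rep f ts ps \<longleftrightarrow> sorted_wrt (<) ts \<and> length ps = length ts + 1 \<and>
     (\<forall>x. \<forall>i < length ps. (i = 0 \<or> ts ! (i - 1) \<le> x) \<and> (i = length ts \<or> x \<le> ts ! i)
          \<longrightarrow> f x = fst (ps ! i) * x + snd (ps ! i))"

definition dyadic_pwl_rep :: "(real \<Rightarrow> real) \<Rightarrow> real list \<Rightarrow> (real \<times> real) list \<Rightarrow> bool" where
  "dyadic_pwl_rep f ts ps \<longleftrightarrow> pwl_rep f ts ps \<and> (\<forall>t \<in> set ts. dyadic t)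
     \<and> (\<forall>p \<in> set ps. dyadic (fst p) \<and> dyadic (snd p))"

definition dyadic_pwl :: "(real \<Rightarrow> real) \<Rightarrow> bool" where
  "dyadic_pwl f \<longleftrightarrow> continuous_on UNIV f \<and> (\<exists>ts ps. dyadic_pwl_rep f ts ps)"

definition rational_pwl_fnn :: "fnn \<Rightarrow> bool" where
  "rational_pwl_fnn N \<longleftrightarrow> fnn_wf N
     \<and> (\<forall>e \<in> edges N. dyadic (weight N e))
     \<and> (\<forall>v \<in> fnn_noninput N. dyadic (bias N v) \<and> dyadic_pwl (act N v))"

definition int_bits :: "int \<Rightarrow> nat" where
  "int_bits a = 1 + (LEAST m::nat. \<bar>a\<bar> < 2 ^ m)"

definition nat_bits :: "nat \<Rightarrow> nat" where
  "nat_bits n = int_bits (int n)"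

definition dyadic_bits :: "real \<Rightarrow> nat" where
  "dyadic_bits q = (LEAST s. \<exists>(a::int) (e::nat). q = of_int a / 2 ^ e \<and> s = int_bits a + e + 1)"

definition act_bits :: "(real \<Rightarrow> real) \<Rightarrow> nat" where
  "act_bits f = (LEAST s. \<exists>ts ps. dyadic_pwl_rep f ts ps \<and>
      s = 1 + sum_list (map dyadic_bits ts)
            + sum_list (map (\<lambda>p. dyadic_bits (fst p) + dyadic_bits (snd p)) ps))"

definition fnn_bitsize :: "fnn \<Rightarrow> nat" where
  "fnn_bitsize N =
     (\<Sum>v\<in>nodes N. nat_bits v)
   + (\<Sum>v\<in>fnn_noninput N. dyadic_bits (bias N v) + act_bits (act N v))
   + (\<Sum>e\<in>edges N. nat_bits (fst e) + nat_bits (snd e) + dyadic_bits (weight N e))"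

definition lip_const :: "(real \<Rightarrow> real) \<Rightarrow> nat" where
  "lip_const f = (LEAST L::nat. \<forall>x y. \<bar>f x - f y\<bar> \<le> real L * \<bar>x - y\<bar>)"

definition fnn_weight :: "fnn \<Rightarrow> real" where
  "fnn_weight N =
     real (card (nodes N)) + real (card (edges N))
   + Max (insert 0 ((\<lambda>e. \<bar>weight N e\<bar>) ` edges N))
   + Max (insert 0 ((\<lambda>v. \<bar>bias N v\<bar>) ` fnn_noninput N))
   + Max (insert 0 ((\<lambda>v. real (lip_const (act N v)) + act N v 0) ` fnn_noninput N))"

definition fnn_size :: "fnn \<Rightarrow> real" where
  "fnn_size N = max (real (fnn_bitsize N)) (fnn_weight N)"

end

theory Submission
  imports Defs
begin

text \<open>Put \<open>m = n + k + 1\<close> and \<open>q = \<lfloor>2^m / n\<rfloor>\<close>. The network computes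
  \<open>F(r) = \<Sum>j<n. min 1 (max 0 (2^m r - ((j + 1) q - 1)))\<close>, a sum of \<open>n\<close> unit ramps of slope \<open>2^m\<close>
  placed \<open>q \<ge> 1\<close> apart. This staircase takes the value \<open>i < n\<close> exactly on the interval
  \<open>[i q, (i + 1) q - 1] / 2^m\<close> of length \<open>(q - 1) / 2^m\<close>, and \<open>n q \<le> 2^m < n (q + 1)\<close> places this
  length between \<open>(1 - 2^-k) / n\<close> and \<open>1 / n\<close>. Each ramp is
  \<open>2^m relu(r - a) - relu(2^m relu(r - a) - 1)\<close> with a dyadic threshold \<open>a\<close>; the factor \<open>2^m\<close> is
  built up by a chain of \<open>m\<close> doublings, so that all weights stay bounded by 2 and the network has
  \<open>O(n (n + k))\<close> nodes.\<close>

lemma int_bits_le: "\<bar>a\<bar> < 2 ^ M \<Longrightarrow> int_bits a \<le> M + 1"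
  unfolding int_bits_def by (simp add: Least_le)

lemma nat_bits_le: "nat_bits v \<le> v + 1"
proof -
  have "int v < 2 ^ v" using less_exp[of v] by (metis of_nat_less_iff of_nat_numeral of_nat_power)
  then show ?thesis unfolding nat_bits_def using int_bits_le by simp
qed

lemma dyadic_bits_le: "\<bar>a\<bar> < 2 ^ M \<Longrightarrow> dyadic_bits (of_int a / 2 ^ e) \<le> M + e + 2"
proof -
  assume "\<bar>a\<bar> < 2 ^ M"
  have "dyadic_bits (of_int a / 2 ^ e) \<le> int_bits a + e + 1"
    unfolding dyadic_bits_def by (rule Least_le) blast
  with int_bits_le[OF \<open>\<bar>a\<bar> < 2 ^ M\<close>] show ?thesis by simp
qed

lemma dyadic_bits_of_int_le: "\<bar>a\<bar> < 2 ^ M \<Longrightarrow> dyadic_bits (of_int a) \<le> M + 2"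
  using dyadic_bits_le[of a M 0] by simp

lemma dyadic_of_int_div_power: "dyadic (of_int a / 2 ^ e)"
  unfolding dyadic_def by blast

lemma dyadic_of_int: "dyadic (of_int a)"
  using dyadic_of_int_div_power[of a 0] by simp

lemma relu_nonneg: "0 \<le> relu x"
  by (simp add: relu_def)

lemma relu_eq_self: "0 \<le> x \<Longrightarrow> relu x = x"
  by (simp add: relu_def)

lemma mult_relu: "0 \<le> c \<Longrightarrow> c * relu x = relu (c * x)"
  by (simp add: relu_def max_mult_distrib_left)

lemma relu_diff_relu_eq_clamp: "relu x - relu (relu x - 1) = min 1 (max 0 x)"
  by (simp add: relu_def max_def min_def)

lemma dyadic_pwl_rep_relu: "dyadic_pwl_rep relu [0] [(0, 0), (1, 0)]"
  unfolding dyadic_pwl_rep_def pwl_rep_def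
  using dyadic_of_int[of 0] dyadic_of_int[of 1]
  by (auto simp: relu_def less_Suc_eq numeral_2_eq_2)

lemma dyadic_pwl_relu: "dyadic_pwl relu"
proof -
  have "continuous_on UNIV relu" unfolding relu_def by (intro continuous_intros)
  with dyadic_pwl_rep_relu show ?thesis unfolding dyadic_pwl_def by blast
qed

lemma act_bits_relu_le: "act_bits relu \<le> 12"
proof -
  have "act_bits relu \<le> 1 + sum_list (map dyadic_bits [0])
      + sum_list (map (\<lambda>p. dyadic_bits (fst p) + dyadic_bits (snd p)) [(0, 0), (1, 0)])"
    unfolding act_bits_def by (rule Least_le) (use dyadic_pwl_rep_relu in blast)
  moreover have "dyadic_bits 0 \<le> 2" using dyadic_bits_of_int_le[of 0 0] by simp
  moreover have "dyadic_bits 1 \<le> 3" using dyadic_bits_of_int_le[of 1 1] by simp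
  ultimately show ?thesis by simp
qed

lemma lip_const_relu_le: "lip_const relu \<le> 1"
  unfolding lip_const_def by (rule Least_le) (auto simp: relu_def)

lemma fnn_val_eqI:
  assumes "fnn_wf N"
    and "\<And>v. v \<in> fnn_sources N \<Longrightarrow> g v = x"
    and "\<And>v. v \<in> fnn_noninput N \<Longrightarrow>
           g v = act N v (bias N v + (\<Sum>u\<in>{u. u < v \<and> (u, v) \<in> edges N}. weight N (u, v) * g u))"
  shows "v \<in> nodes N \<Longrightarrow> fnn_val N x v = g v"
proof (induction v rule: less_induct)
  case (less v)
  show ?case
  proof (cases "v \<in> fnn_sources N")
    case True
    then show ?thesis using assms(2) by simp
  next
    case False
    have "u \<in> nodes N" if "(u, v) \<in> edges N" for u
      using that \<open>fnn_wf N\<close> by (auto simp: fnn_wf_def)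
    then have "(\<Sum>u\<in>{u. u < v \<and> (u, v) \<in> edges N}. weight N (u, v) * fnn_val N x u)
        = (\<Sum>u\<in>{u. u < v \<and> (u, v) \<in> edges N}. weight N (u, v) * g u)"
      using less.IH by (intro sum.cong) auto
    moreover have "v \<in> fnn_noninput N" using False less.prems by (simp add: fnn_noninput_def)
    ultimately show ?thesis using False assms(3) by simp
  qed
qed

lemma fnn_bitsize_le:
  assumes nodes: "nodes N = {..M}" and edges: "edges N \<subseteq> {..M} \<times> {..M}"
    and bias_bits: "\<And>v. v \<in> fnn_noninput N \<Longrightarrow> dyadic_bits (bias N v) + act_bits (act N v) \<le> b"
    and weight_bits: "\<And>e. e \<in> edges N \<Longrightarrow> dyadic_bits (weight N e) \<le> w"
  shows "fnn_bitsize N \<le> (M + 1)^2 * (2 * M + 3 + b + w)"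
proof -
  have card_edges: "card (edges N) \<le> (M + 1)^2"
    using card_mono[OF _ edges] by (simp add: card_cartesian_product power2_eq_square)
  have card_noninput: "card (fnn_noninput N) \<le> M + 1"
    using card_mono[of "{..M}" "fnn_noninput N"] nodes by (auto simp: fnn_noninput_def)
  have "nat_bits v \<le> M + 1" if "v \<in> nodes N" for v
    using that nodes nat_bits_le[of v] by auto
  then have "(\<Sum>v\<in>nodes N. nat_bits v) \<le> card (nodes N) * (M + 1)"
    using sum_bounded_above[of "nodes N" nat_bits "M + 1"] by simp
  also have "\<dots> = (M + 1) * (M + 1)" using nodes by simp
  finally have s1: "(\<Sum>v\<in>nodes N. nat_bits v) \<le> (M + 1) * (M + 1)" .
  have "(\<Sum>v\<in>fnn_noninput N. dyadic_bits (bias N v) + act_bits (act N v))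
      \<le> card (fnn_noninput N) * b"
    using sum_bounded_above[of "fnn_noninput N", OF bias_bits] by simp
  also have "\<dots> \<le> (M + 1) * b" using card_noninput by (rule mult_le_mono1)
  finally have s2: "(\<Sum>v\<in>fnn_noninput N. dyadic_bits (bias N v) + act_bits (act N v)) \<le> (M + 1) * b" .
  have "nat_bits (fst e) + nat_bits (snd e) + dyadic_bits (weight N e) \<le> 2 * M + 2 + w"
    if "e \<in> edges N" for e
    using that edges nat_bits_le[of "fst e"] nat_bits_le[of "snd e"] weight_bits[of e] by auto
  then have "(\<Sum>e\<in>edges N. nat_bits (fst e) + nat_bits (snd e) + dyadic_bits (weight N e))
      \<le> card (edges N) * (2 * M + 2 + w)"
    using sum_bounded_above[of "edges N" _ "2 * M + 2 + w"] by simp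
  also have "\<dots> \<le> (M + 1)^2 * (2 * M + 2 + w)" using card_edges by (rule mult_le_mono1)
  finally have "fnn_bitsize N \<le> (M + 1) * (M + 1) + (M + 1) * b + (M + 1)^2 * (2 * M + 2 + w)"
    unfolding fnn_bitsize_def using s1 s2 by linarith
  also have "\<dots> \<le> (M + 1)^2 * (2 * M + 3 + b + w)"
    by (simp add: power2_eq_square algebra_simps)
  finally show ?thesis .
qed

lemma fnn_weight_le:
  assumes nodes: "nodes N = {..M}" and edges: "edges N \<subseteq> {..M} \<times> {..M}"
    and weight_abs: "\<And>e. e \<in> edges N \<Longrightarrow> \<bar>weight N e\<bar> \<le> c"
    and bias_abs: "\<And>v. v \<in> fnn_noninput N \<Longrightarrow> \<bar>bias N v\<bar> \<le> c"
    and act_lip: "\<And>v. v \<in> fnn_noninput N \<Longrightarrow> real (lip_const (act N v)) + act N v 0 \<le> c"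
    and "0 \<le> c"
  shows "fnn_weight N \<le> real (M + 1) + real ((M + 1)^2) + 3 * c"
proof -
  have max_le: "Max (insert 0 (f ` A)) \<le> c"
    if "finite A" "\<And>x. x \<in> A \<Longrightarrow> f x \<le> c" for f :: "_ \<Rightarrow> real" and A
    using that \<open>0 \<le> c\<close> by (simp add: Max_le_iff)
  have fin_edges: "finite (edges N)" using edges finite_subset by blast
  have fin_noninput: "finite (fnn_noninput N)" using nodes by (simp add: fnn_noninput_def)
  have "card (edges N) \<le> (M + 1)^2"
    using card_mono[OF _ edges] by (simp add: card_cartesian_product power2_eq_square)
  then have "real (card (edges N)) \<le> real ((M + 1)^2)" by (simp only: of_nat_le_iff)
  moreover have "real (card (nodes N)) = real (M + 1)" using nodes by simp
  ultimately show ?thesis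
    unfolding fnn_weight_def
    using max_le[OF fin_edges, of "\<lambda>e. \<bar>weight N e\<bar>"] max_le[OF fin_noninput, of "\<lambda>v. \<bar>bias N v\<bar>"]
      max_le[OF fin_noninput, of "\<lambda>v. real (lip_const (act N v)) + act N v 0"]
      weight_abs bias_abs act_lip
    by (smt (verit))
qed

lemma fnn_size_le:
  assumes "nodes N = {..M}" "edges N \<subseteq> {..M} \<times> {..M}"
    and "\<And>v. v \<in> fnn_noninput N \<Longrightarrow> dyadic_bits (bias N v) + act_bits (act N v) \<le> b"
    and "\<And>e. e \<in> edges N \<Longrightarrow> dyadic_bits (weight N e) \<le> w"
    and "\<And>e. e \<in> edges N \<Longrightarrow> \<bar>weight N e\<bar> \<le> c"
    and "\<And>v. v \<in> fnn_noninput N \<Longrightarrow> \<bar>bias N v\<bar> \<le> c"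
    and "\<And>v. v \<in> fnn_noninput N \<Longrightarrow> real (lip_const (act N v)) + act N v 0 \<le> c"
    and "0 \<le> c"
  shows "fnn_size N \<le> real ((M + 1)^2 * (2 * M + 3 + b + w)) + 3 * c"
proof -
  have "M + 1 + (M + 1)^2 = (M + 1) * (M + 2)" by (simp add: power2_eq_square)
  also have "\<dots> \<le> (M + 1) * ((M + 1) * (2 * M + 3 + b + w))"
    by (intro mult_le_mono2) (simp add: algebra_simps)
  finally have "M + 1 + (M + 1)^2 \<le> (M + 1)^2 * (2 * M + 3 + b + w)"
    by (simp only: power2_eq_square mult.assoc)
  then have "real (M + 1) + real ((M + 1)^2) \<le> real ((M + 1)^2 * (2 * M + 3 + b + w))"
    by (simp only: of_nat_add[symmetric] of_nat_le_iff)
  moreover have "real (fnn_bitsize N) \<le> real ((M + 1)^2 * (2 * M + 3 + b + w))"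
    using fnn_bitsize_le[of N M b w] assms by (simp only: of_nat_le_iff)
  ultimately show ?thesis
    using fnn_weight_le[of N M c] assms unfolding fnn_size_def by fastforce
qed

lemma sum_shift_lessThan: "(\<Sum>u\<in>{a..<a + n}. f u) = (\<Sum>j<n. f (a + j))" for a n :: nat
  by (simp add: sum.atLeastLessThan_shift_0 atLeast0LessThan)

definition ramp :: "real \<Rightarrow> real \<Rightarrow> nat \<Rightarrow> real" where
  "ramp q x j = min 1 (max 0 (x - ((real j + 1) * q - 1)))"

definition staircase :: "nat \<Rightarrow> real \<Rightarrow> real \<Rightarrow> real" where
  "staircase n q x = (\<Sum>j<n. ramp q x j)"

lemma ramp_nonneg: "0 \<le> ramp q x j"
  and ramp_le_1: "ramp q x j \<le> 1"
  by (auto simp: ramp_def)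

lemma ramp_eq_1: "0 \<le> q \<Longrightarrow> j < i \<Longrightarrow> real i * q \<le> x \<Longrightarrow> ramp q x j = 1"
proof -
  assume "0 \<le> q" "j < i" "real i * q \<le> x"
  then have "(real j + 1) * q \<le> real i * q" by (intro mult_right_mono) auto
  then show ?thesis using \<open>real i * q \<le> x\<close> by (simp add: ramp_def)
qed

lemma ramp_eq_0: "0 \<le> q \<Longrightarrow> i \<le> j \<Longrightarrow> x \<le> (real i + 1) * q - 1 \<Longrightarrow> ramp q x j = 0"
proof -
  assume "0 \<le> q" "i \<le> j" "x \<le> (real i + 1) * q - 1"
  then have "(real i + 1) * q \<le> (real j + 1) * q" by (intro mult_right_mono) auto
  then show ?thesis using \<open>x \<le> (real i + 1) * q - 1\<close> by (simp add: ramp_def)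
qed

lemma staircase_split:
  "i < n \<Longrightarrow> staircase n q x = (\<Sum>j<i. ramp q x j) + ramp q x i + (\<Sum>j\<in>{Suc i..<n}. ramp q x j)"
proof -
  assume "i < n"
  have "staircase n q x = (\<Sum>j<Suc i. ramp q x j) + (\<Sum>j\<in>{Suc i..<n}. ramp q x j)"
    unfolding staircase_def lessThan_atLeast0
    by (rule sum.atLeastLessThan_concat[symmetric]) (use \<open>i < n\<close> in auto)
  then show ?thesis by simp
qed

lemma staircase_eq_iff:
  assumes "1 \<le> q" "0 \<le> x" "i < n"
  shows "staircase n q x = real i \<longleftrightarrow> real i * q \<le> x \<and> x \<le> (real i + 1) * q - 1"
proof -
  note split = staircase_split[OF \<open>i < n\<close>, of q x]
  have below: "(\<Sum>j<i. ramp q x j) = real i" if "real i * q \<le> x"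
    using ramp_eq_1[of q _ i x] that assms(1) by simp
  have above: "ramp q x i = 0" "(\<Sum>j\<in>{Suc i..<n}. ramp q x j) = 0" if "x \<le> (real i + 1) * q - 1"
    using ramp_eq_0[of q i _ x] that assms(1) by simp_all
  have gap: "real i * q \<le> (real i + 1) * q - 1" using \<open>1 \<le> q\<close> by (simp add: algebra_simps)
  show ?thesis
  proof
    assume sum_i: "staircase n q x = real i"
    show "real i * q \<le> x \<and> x \<le> (real i + 1) * q - 1"
    proof (intro conjI; rule ccontr)
      assume "\<not> real i * q \<le> x"
      then obtain i' where i': "i = Suc i'" and x_lt: "x < (real i' + 1) * q"
        using \<open>0 \<le> x\<close> by (cases i) (auto simp: algebra_simps)
      have "(\<Sum>j<i'. ramp q x j) \<le> real i'"
        using sum_bounded_above[of "{..<i'}" "ramp q x" 1] ramp_le_1 by simp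
      moreover have "ramp q x i' < 1" using x_lt by (simp add: ramp_def)
      moreover have "staircase n q x = (\<Sum>j<i'. ramp q x j) + ramp q x i'"
        using split above \<open>\<not> real i * q \<le> x\<close> gap i' by simp
      ultimately show False using sum_i i' by simp
    next
      assume "\<not> x \<le> (real i + 1) * q - 1"
      then have "ramp q x i > 0" "real i * q \<le> x" using gap by (auto simp: ramp_def)
      moreover have "0 \<le> (\<Sum>j\<in>{Suc i..<n}. ramp q x j)" by (simp add: ramp_nonneg sum_nonneg)
      ultimately show False using split below sum_i by simp
    qed
  next
    assume "real i * q \<le> x \<and> x \<le> (real i + 1) * q - 1"
    then show "staircase n q x = real i" using split below above by simp
  qed
qed

locale uniform_sampler =
  fixes n k :: nat
  assumes n_pos: "0 < n"
begin

definition m :: nat where "m = n + k + 1"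

definition q :: nat where "q = 2 ^ m div n"

definition threshold :: "nat \<Rightarrow> real" where
  "threshold j = ((real j + 1) * real q - 1) / 2 ^ m"

lemma q_ge_1: "1 \<le> q"
proof -
  have "n < 2 ^ n" by (rule less_exp)
  also have "\<dots> \<le> 2 ^ m" by (rule power_increasing) (simp_all add: m_def)
  finally show ?thesis using n_pos by (simp add: q_def div_greater_zero_iff Suc_le_eq)
qed

lemma n_mult_q_le: "n * q \<le> 2 ^ m"
  by (simp add: q_def)

lemma less_n_mult_Suc_q: "2 ^ m < n * (q + 1)"
  using n_pos by (simp add: q_def) (metis add.commute dividend_less_times_div)

lemma Suc_mult_q_le: "j < n \<Longrightarrow> (j + 1) * q \<le> 2 ^ m"
  using mult_le_mono1[of "j + 1" n q] n_mult_q_le by simp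

lemma Suc_mult_q_le_real: "j < n \<Longrightarrow> (real j + 1) * q \<le> 2 ^ m"
proof -
  assume "j < n"
  then have "real ((j + 1) * q) \<le> real (2 ^ m)" using Suc_mult_q_le by (simp only: of_nat_le_iff)
  then show ?thesis by (simp add: algebra_simps)
qed

text \<open>Node \<open>0\<close> is the input and \<open>out\<close> the output; node \<open>1 + t * n + j\<close> is neuron \<open>j < n\<close> of
  layer \<open>t \<le> m + 1\<close>. Layer \<open>0\<close> computes \<open>relu (r - threshold j)\<close>, layers \<open>1, \<dots>, m\<close> double it,
  layer \<open>m + 1\<close> computes \<open>relu (2^m relu (r - threshold j) - 1)\<close>, and \<open>out\<close> sums layer \<open>m\<close>
  minus layer \<open>m + 1\<close>.\<close>

definition out :: nat where "out = (m + 2) * n + 1"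

definition sampler_edges :: "(nat \<times> nat) set" where
  "sampler_edges = {(u, v). 1 \<le> v \<and> v < out \<and> u = (if v \<le> n then 0 else v - n)}
     \<union> {(u, out) | u. 1 + m * n \<le> u \<and> u < out}"

definition sampler_weight :: "nat \<times> nat \<Rightarrow> real" where
  "sampler_weight e = (case e of (u, v) \<Rightarrow>
     if v = out then (if u \<le> (m + 1) * n then 1 else -1)
     else if n < v \<and> v \<le> (m + 1) * n then 2 else 1)"

definition sampler_bias :: "nat \<Rightarrow> real" where
  "sampler_bias v =
     (if v \<le> n then - threshold (v - 1) else if (m + 1) * n < v \<and> v < out then -1 else 0)"

definition sampler :: fnn where
  "sampler = \<lparr>nodes = {..out}, edges = sampler_edges, act = \<lambda>_. relu,
     weight = sampler_weight, bias = sampler_bias\<rparr>"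

definition node_value :: "real \<Rightarrow> nat \<Rightarrow> real" where
  "node_value r v = (if v = 0 then r
     else if v = out then staircase n q (2 ^ m * r)
     else if v \<le> (m + 1) * n then 2 ^ ((v - 1) div n) * relu (r - threshold ((v - 1) mod n))
     else relu (2 ^ m * relu (r - threshold ((v - 1) mod n)) - 1))"

lemma layer_le: "j < n \<Longrightarrow> t \<le> s \<Longrightarrow> 1 + t * n + j \<le> (s + 1) * n"
proof -
  assume "j < n" "t \<le> s"
  then have "1 + t * n + j \<le> (t + 1) * n" by simp
  also have "\<dots> \<le> (s + 1) * n" using \<open>t \<le> s\<close> by (intro mult_le_mono1) simp
  finally show ?thesis .
qed

lemma layer_lt_out: "j < n \<Longrightarrow> t \<le> m + 1 \<Longrightarrow> 1 + t * n + j < out"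
  using layer_le[of j t "m + 1"] by (simp add: out_def)

lemma node_value_doubling:
  "j < n \<Longrightarrow> t \<le> m \<Longrightarrow> node_value r (1 + t * n + j) = 2 ^ t * relu (r - threshold j)"
  using layer_le[of j t m] layer_lt_out[of j t] by (simp add: node_value_def)

lemma node_value_cut:
  "j < n \<Longrightarrow> node_value r (1 + (m + 1) * n + j) = relu (2 ^ m * relu (r - threshold j) - 1)"
  using layer_lt_out[of j "m + 1"] by (simp add: node_value_def del: add_Suc_right)

lemma sampler_edges_lt: "(u, v) \<in> sampler_edges \<Longrightarrow> u < v"
  using n_pos by (auto simp: sampler_edges_def split: if_splits)

lemma sampler_edges_subset: "sampler_edges \<subseteq> {..out} \<times> {..out}"
  by (auto simp: sampler_edges_def)

lemma in_neighbours:
  "{u. u < v \<and> (u, v) \<in> sampler_edges} =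
     (if v = out then {1 + m * n..<out}
      else if 1 \<le> v \<and> v < out then {if v \<le> n then 0 else v - n} else {})"
  using n_pos by (auto simp: sampler_edges_def)

lemma sources_sampler: "fnn_sources sampler = {0}"
proof -
  have "(if v \<le> n then 0 else v - n, v) \<in> sampler_edges" if "1 \<le> v" "v < out" for v
    using that by (simp add: sampler_edges_def)
  moreover have "(out - 1, out) \<in> sampler_edges" using n_pos by (auto simp: sampler_edges_def out_def)
  ultimately have "v \<notin> fnn_sources sampler" if "1 \<le> v" for v
    using that by (cases "v < out") (auto simp: fnn_sources_def sampler_def)
  moreover have "0 \<in> fnn_sources sampler"
    using sampler_edges_lt by (auto simp: fnn_sources_def sampler_def)
  moreover have "fnn_sources sampler \<subseteq> {..out}" by (auto simp: fnn_sources_def sampler_def)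
  ultimately show ?thesis by (fastforce simp: Suc_le_eq)
qed

lemma sinks_sampler: "fnn_sinks sampler = {out}"
proof -
  have "\<exists>w. (v, w) \<in> sampler_edges" if "v < out" for v
  proof (cases "v = 0 \<or> v + n < out")
    case True
    then have "(v, if v = 0 then 1 else v + n) \<in> sampler_edges"
      using n_pos that by (auto simp: sampler_edges_def out_def)
    then show ?thesis by blast
  next
    case False
    then have "(v, out) \<in> sampler_edges" using that by (auto simp: sampler_edges_def out_def)
    then show ?thesis by blast
  qed
  moreover have "(out, w) \<notin> sampler_edges" for w
    using sampler_edges_lt sampler_edges_subset by fastforce
  ultimately show ?thesis by (fastforce simp: fnn_sinks_def sampler_def le_less)
qed

lemma wf_sampler: "fnn_wf sampler"
  using sampler_edges_lt sampler_edges_subset by (auto simp: fnn_wf_def sampler_def)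

lemma noninput_sampler: "fnn_noninput sampler = {1..out}"
  unfolding fnn_noninput_def sources_sampler by (auto simp: sampler_def)

lemma ramp_threshold:
  "2 ^ m * relu (r - threshold j) - relu (2 ^ m * relu (r - threshold j) - 1) = ramp q (2 ^ m * r) j"
proof -
  have "2 ^ m * (r - threshold j) = 2 ^ m * r - ((real j + 1) * real q - 1)"
    unfolding threshold_def by (simp add: field_simps)
  then have "2 ^ m * relu (r - threshold j) = relu (2 ^ m * r - ((real j + 1) * real q - 1))"
    by (simp add: mult_relu)
  then show ?thesis by (simp add: relu_diff_relu_eq_clamp ramp_def)
qed

lemma node_value_out_eq:
  "node_value r out = relu (sampler_bias out +
     (\<Sum>u\<in>{1 + m * n..<out}. sampler_weight (u, out) * node_value r u))"
proof -
  let ?a = "1 + m * n" and ?b = "1 + (m + 1) * n"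
  have split: "{?a..<out} = {?a..<?a + n} \<union> {?b..<?b + n}" "?b = ?a + n" "out = ?b + n"
    by (auto simp: out_def)
  have "(\<Sum>u\<in>{?a..<out}. sampler_weight (u, out) * node_value r u)
      = (\<Sum>u\<in>{?a..<?a + n}. node_value r u) - (\<Sum>u\<in>{?b..<?b + n}. node_value r u)"
  proof -
    have "sampler_weight (u, out) = 1" if "u < ?a + n" for u
      using that by (simp add: sampler_weight_def)
    moreover have "sampler_weight (u, out) = -1" if "?b \<le> u" for u
      using that by (simp add: sampler_weight_def)
    ultimately show ?thesis
      unfolding split(1) by (subst sum.union_disjoint) (auto simp: split(2) sum_negf)
  qed
  also have "\<dots> = (\<Sum>j<n. 2 ^ m * relu (r - threshold j))
      - (\<Sum>j<n. relu (2 ^ m * relu (r - threshold j) - 1))"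
    unfolding sum_shift_lessThan
    by (intro arg_cong2[where f = minus] sum.cong refl node_value_doubling node_value_cut) auto
  also have "\<dots> = staircase n q (2 ^ m * r)"
    by (simp add: staircase_def ramp_threshold flip: sum_subtractf)
  finally have "(\<Sum>u\<in>{?a..<out}. sampler_weight (u, out) * node_value r u) = staircase n q (2 ^ m * r)" .
  moreover have "0 \<le> staircase n q (2 ^ m * r)" by (simp add: staircase_def ramp_nonneg sum_nonneg)
  moreover have "sampler_bias out = 0" "node_value r out = staircase n q (2 ^ m * r)"
    by (simp_all add: sampler_bias_def node_value_def out_def)
  ultimately show ?thesis by (simp add: relu_eq_self)
qed

lemma node_value_hidden_eq:
  assumes "1 \<le> v" "v < out"
  defines "u \<equiv> if v \<le> n then 0 else v - n"
  shows "node_value r v = relu (sampler_bias v + sampler_weight (u, v) * node_value r u)"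
proof -
  define t j where "t = (v - 1) div n" and "j = (v - 1) mod n"
  have v: "v = 1 + t * n + j" and "j < n"
    using assms(1) n_pos by (simp_all add: t_def j_def)
  have "v - 1 < (m + 2) * n" using assms by (simp add: out_def)
  then have "t < m + 2" unfolding t_def by (rule less_mult_imp_div_less)
  then consider "t = 0" | t' where "t = Suc t'" "t' < m" | "t = m + 1"
    by (cases t) force+
  then show ?thesis
  proof cases
    case 1
    then have "u = 0" "sampler_weight (u, v) = 1" "sampler_bias v = - threshold j"
      "node_value r v = relu (r - threshold j)"
      using v \<open>j < n\<close> assms(2) node_value_doubling[of j 0]
      by (simp_all add: u_def sampler_weight_def sampler_bias_def)
    then show ?thesis by (simp add: node_value_def)
  next
    case (2 t')
    have "n < v" "v \<le> (m + 1) * n"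
      using v 2 \<open>j < n\<close> layer_le[of j t m] by auto
    then have "u = 1 + t' * n + j" "sampler_weight (u, v) = 2" "sampler_bias v = 0"
      using v 2 assms(2) by (simp_all add: u_def sampler_weight_def sampler_bias_def)
    then show ?thesis
      using v 2 \<open>j < n\<close> node_value_doubling[of j t' r] node_value_doubling[of j t r]
      by (simp add: relu_eq_self relu_nonneg)
  next
    case 3
    have "(m + 1) * n < v" "v \<noteq> out" "n < v"
      using v 3 assms(2) by auto
    then have "u = 1 + m * n + j" "sampler_weight (u, v) = 1" "sampler_bias v = -1"
      using v 3 assms(2) by (simp_all add: u_def sampler_weight_def sampler_bias_def)
    moreover have "node_value r (1 + m * n + j) = 2 ^ m * relu (r - threshold j)"
      using \<open>j < n\<close> by (rule node_value_doubling) simp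
    moreover have "node_value r v = relu (2 ^ m * relu (r - threshold j) - 1)"
      unfolding v 3 using \<open>j < n\<close> by (rule node_value_cut)
    ultimately show ?thesis by simp
  qed
qed

lemma fnn_fun_sampler: "fnn_fun sampler r = staircase n q (2 ^ m * r)"
proof -
  have "fnn_val sampler r v = node_value r v" if "v \<le> out" for v
  proof (rule fnn_val_eqI[OF wf_sampler])
    show "node_value r v = r" if "v \<in> fnn_sources sampler" for v
      using that sources_sampler by (simp add: node_value_def)
    show "node_value r v = act sampler v (bias sampler v +
        (\<Sum>u\<in>{u. u < v \<and> (u, v) \<in> edges sampler}. weight sampler (u, v) * node_value r u))"
      if "v \<in> fnn_noninput sampler" for v
    proof (cases "v = out")
      case True
      then show ?thesis using node_value_out_eq[of r] by (simp add: sampler_def in_neighbours)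
    next
      case False
      then have "1 \<le> v" "v < out" using that by (auto simp: noninput_sampler)
      then show ?thesis using node_value_hidden_eq[of v r] by (simp add: sampler_def in_neighbours)
    qed
  qed (use that in \<open>simp add: sampler_def\<close>)
  moreover have "fnn_out sampler = out" using sinks_sampler by (simp add: fnn_out_def)
  ultimately have "fnn_fun sampler r = node_value r out" unfolding fnn_fun_def by simp
  then show ?thesis by (simp add: node_value_def out_def)
qed

definition cell :: "nat \<Rightarrow> real set" where
  "cell i = {real i * q / 2 ^ m .. ((real i + 1) * q - 1) / 2 ^ m}"

lemma level_set_eq_cell:
  assumes "i < n"
  shows "{r \<in> {0..1}. fnn_fun sampler r = real i} = cell i"
proof -
  have "cell i \<subseteq> {0..1}" using Suc_mult_q_le_real[OF assms] by (auto simp: cell_def)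
  moreover have "fnn_fun sampler r = real i \<longleftrightarrow> r \<in> cell i" if "0 \<le> r" for r
    using staircase_eq_iff[of q "2 ^ m * r" i n] q_ge_1 that assms
    by (simp add: fnn_fun_sampler cell_def field_simps)
  ultimately show ?thesis by auto
qed

lemma measure_cell: "measure lborel (cell i) = (real q - 1) / 2 ^ m"
proof -
  have "real i * q / 2 ^ m \<le> ((real i + 1) * q - 1) / 2 ^ m"
    using q_ge_1 by (simp add: divide_right_mono algebra_simps)
  then have "measure lborel (cell i) = ((real i + 1) * q - 1) / 2 ^ m - real i * q / 2 ^ m"
    by (simp add: cell_def)
  also have "\<dots> = (real q - 1) / 2 ^ m" by (simp add: diff_divide_distrib[symmetric] algebra_simps)
  finally show ?thesis .
qed

lemma measure_level_set:
  "i < n \<Longrightarrow> measure lborel {r \<in> {0..1}. fnn_fun sampler r = real i} = (real q - 1) / 2 ^ m"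
  by (simp only: level_set_eq_cell measure_cell)

lemma measure_in_range:
  "measure lborel {r \<in> {0..1}. fnn_fun sampler r \<in> real ` {0..<n}} = real n * (real q - 1) / 2 ^ m"
proof -
  have "{r \<in> {0..1}. fnn_fun sampler r \<in> real ` {0..<n}}
      = (\<Union>i\<in>{0..<n}. {r \<in> {0..1}. fnn_fun sampler r = real i})" by auto
  also have "\<dots> = (\<Union>i\<in>{0..<n}. cell i)" using level_set_eq_cell by simp
  finally have "measure lborel {r \<in> {0..1}. fnn_fun sampler r \<in> real ` {0..<n}}
      = measure lborel (\<Union>i\<in>{0..<n}. cell i)" by simp
  also have "\<dots> = (\<Sum>i\<in>{0..<n}. measure lborel (cell i))"
  proof (rule measure_finite_Union)
    show "disjoint_family_on cell {0..<n}"
    proof (unfold disjoint_family_on_def, intro ballI impI)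
      fix i j assume "i \<in> {0..<n}" "j \<in> {0..<n}" "i \<noteq> j"
      then show "cell i \<inter> cell j = {}"
        using level_set_eq_cell[of i, symmetric] level_set_eq_cell[of j, symmetric] by auto
    qed
  qed (auto simp: cell_def emeasure_lborel_Icc_eq)
  finally show ?thesis by (simp add: measure_cell)
qed

lemma measure_cell_le: "(real q - 1) / 2 ^ m \<le> 1 / real n"
proof -
  have "real (n * q) \<le> real (2 ^ m)" using n_mult_q_le by (simp only: of_nat_le_iff)
  then show ?thesis using n_pos by (simp add: field_simps)
qed

lemma measure_cells_ge: "1 - 2 powi (- int k) \<le> real n * (real q - 1) / 2 ^ m"
proof -
  have "real (2 ^ m) < real (n * (q + 1))" using less_n_mult_Suc_q by (simp only: of_nat_less_iff)
  then have upper: "2 ^ m < real n * real q + real n" by (simp add: algebra_simps)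
  have "2 * n \<le> 2 ^ (n + 1)" using less_exp[of n] by simp
  then have "real (2 * n) \<le> real (2 ^ (n + 1))" by (simp only: of_nat_le_iff)
  then have "2 * real n \<le> 2 ^ (n + 1)" by simp
  then have "2 ^ m - 2 ^ (n + 1) \<le> real n * (real q - 1)"
    using upper unfolding right_diff_distrib by linarith
  moreover have "(2 :: real) ^ m = 2 ^ (n + 1) * 2 ^ k"
    unfolding m_def power_add[symmetric] by (simp add: ac_simps)
  then have "1 - 2 powi (- int k) = (2 ^ m - 2 ^ (n + 1)) / (2 ^ m :: real)"
    by (simp add: power_int_minus inverse_eq_divide diff_divide_distrib)
  ultimately show ?thesis by (simp add: divide_right_mono)
qed

lemma measure_cell_ge: "(1 - 2 powi (- int k)) / real n \<le> (real q - 1) / 2 ^ m"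
  using measure_cells_ge n_pos by (simp add: field_simps)

lemma neg_threshold_eq: "- threshold j = of_int (1 - int ((j + 1) * q)) / 2 ^ m"
  unfolding threshold_def by (simp add: minus_divide_left algebra_simps)

lemma dyadic_neg_threshold: "dyadic (- threshold j)"
  unfolding neg_threshold_eq by (rule dyadic_of_int_div_power)

lemma dyadic_bits_neg_threshold: "j < n \<Longrightarrow> dyadic_bits (- threshold j) \<le> 2 * m + 2"
proof -
  assume "j < n"
  define p where "p = (j + 1) * q"
  have "1 \<le> p" using q_ge_1 by (simp add: p_def)
  then have "1 \<le> int p" by linarith
  moreover have "int p \<le> 2 ^ m"
    using Suc_mult_q_le[OF \<open>j < n\<close>] unfolding p_def by (metis of_nat_le_iff of_nat_numeral of_nat_power)
  moreover have "(0 :: int) < 2 ^ m" by simp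
  ultimately have "\<bar>1 - int p\<bar> < 2 ^ m" unfolding abs_less_iff by linarith
  then have "dyadic_bits (of_int (1 - int p) / 2 ^ m) \<le> m + m + 2" by (rule dyadic_bits_le)
  then show ?thesis unfolding neg_threshold_eq p_def by linarith
qed

lemma abs_threshold_le: "j < n \<Longrightarrow> \<bar>threshold j\<bar> \<le> 1"
proof -
  assume "j < n"
  moreover have "1 * 1 \<le> (real j + 1) * q" using q_ge_1 by (intro mult_mono) auto
  ultimately show ?thesis using Suc_mult_q_le_real[of j] by (simp add: threshold_def)
qed

lemma dyadic_sampler_weight: "dyadic (sampler_weight e)"
  using dyadic_of_int[of 1] dyadic_of_int[of "-1"] dyadic_of_int[of 2]
  by (simp add: sampler_weight_def split: prod.splits)

lemma dyadic_bits_sampler_weight: "dyadic_bits (sampler_weight e) \<le> 4"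
  using dyadic_bits_of_int_le[of 1 2] dyadic_bits_of_int_le[of "-1" 2] dyadic_bits_of_int_le[of 2 2]
  by (simp add: sampler_weight_def split: prod.splits)

lemma abs_sampler_weight_le: "\<bar>sampler_weight e\<bar> \<le> 2"
  by (simp add: sampler_weight_def split: prod.splits)

lemma dyadic_sampler_bias: "dyadic (sampler_bias v)"
  using dyadic_of_int[of "-1"] dyadic_of_int[of 0] dyadic_neg_threshold
  by (simp add: sampler_bias_def)

lemma dyadic_bits_sampler_bias: "1 \<le> v \<Longrightarrow> dyadic_bits (sampler_bias v) \<le> 2 * m + 2"
  using dyadic_bits_neg_threshold[of "v - 1"] dyadic_bits_of_int_le[of "-1" 1] dyadic_bits_of_int_le[of 0 0]
  by (simp add: sampler_bias_def m_def)

lemma abs_sampler_bias_le: "1 \<le> v \<Longrightarrow> \<bar>sampler_bias v\<bar> \<le> 1"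
  using abs_threshold_le[of "v - 1"] by (simp add: sampler_bias_def)

lemma rational_pwl_sampler: "rational_pwl_fnn sampler"
  using wf_sampler dyadic_sampler_weight dyadic_sampler_bias dyadic_pwl_relu
  by (simp add: rational_pwl_fnn_def sampler_def)

lemma dim11_sampler: "fnn_dim11 sampler"
  by (simp add: fnn_dim11_def sources_sampler sinks_sampler)

lemma relu_only_sampler: "fnn_relu_only sampler"
  by (simp add: fnn_relu_only_def sampler_def)

lemma size_sampler: "fnn_size sampler \<le> 1400 * (real n + real k) ^ 6"
proof -
  define X where "X = n + k"
  have "1 \<le> X" using n_pos by (simp add: X_def)
  then have X_sq: "1 \<le> X ^ 2" "X \<le> X ^ 2" by (simp_all add: power2_eq_square)
  have "out + 1 = (X + 3) * n + 2" by (simp add: out_def m_def X_def algebra_simps)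
  also have "\<dots> \<le> (X + 3) * X + 2" by (simp add: X_def)
  also have "\<dots> = X ^ 2 + 3 * X + 2" by (simp add: power2_eq_square algebra_simps)
  finally have out_le: "out + 1 \<le> 6 * X ^ 2" using X_sq by linarith
  have "2 * out + 3 + (2 * m + 14) + 4 = 2 * out + 2 * X + 23" by (simp add: m_def X_def)
  also have "\<dots> \<le> 37 * X ^ 2" using out_le X_sq by linarith
  finally have "(out + 1) ^ 2 * (2 * out + 3 + (2 * m + 14) + 4) \<le> (6 * X ^ 2) ^ 2 * (37 * X ^ 2)"
    using out_le by (intro mult_le_mono power_mono) simp_all
  also have "\<dots> = 1332 * X ^ 6" by (simp add: power_mult_distrib flip: power_mult power_add)
  finally have "real ((out + 1) ^ 2 * (2 * out + 3 + (2 * m + 14) + 4)) \<le> real (1332 * X ^ 6)"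
    by (simp only: of_nat_le_iff)
  moreover have "fnn_size sampler \<le> real ((out + 1) ^ 2 * (2 * out + 3 + (2 * m + 14) + 4)) + 3 * 2"
  proof (rule fnn_size_le)
    show "dyadic_bits (bias sampler v) + act_bits (act sampler v) \<le> 2 * m + 14"
      if "v \<in> fnn_noninput sampler" for v
      using that dyadic_bits_sampler_bias[of v] act_bits_relu_le
      unfolding noninput_sampler by (simp add: sampler_def)
    show "\<bar>bias sampler v\<bar> \<le> 2" if "v \<in> fnn_noninput sampler" for v
      using that abs_sampler_bias_le[of v] unfolding noninput_sampler by (simp add: sampler_def)
    show "real (lip_const (act sampler v)) + act sampler v 0 \<le> 2" for v
      using lip_const_relu_le by (simp add: sampler_def relu_def)
  qed (use sampler_edges_subset dyadic_bits_sampler_weight abs_sampler_weight_le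
       in \<open>simp_all add: sampler_def\<close>)
  moreover have "1 \<le> real X ^ 6" using \<open>1 \<le> X\<close> by simp
  ultimately show ?thesis by (simp add: X_def)
qed

end

theorem lemma8p3:
  "\<exists>(c::nat) (d::nat). \<forall>(k::nat) (n::nat). k > 0 \<longrightarrow> n > 0 \<longrightarrow>
     (\<exists>F. rational_pwl_fnn F \<and> fnn_dim11 F \<and> fnn_relu_only F
        \<and> fnn_size F \<le> real c * (real n + real k) ^ d
        \<and> measure lborel {r \<in> {0..1::real}. fnn_fun F r \<in> real ` {0..<n}} \<ge> 1 - 2 powi (- int k)
        \<and> (\<forall>i \<in> {0..<n}.
             (1 - 2 powi (- int k)) / real n \<le> measure lborel {r \<in> {0..1::real}. fnn_fun F r = real i}
           \<and> measure lborel {r \<in> {0..1::real}. fnn_fun F r = real i} \<le> 1 / real n))"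
  apply (rule exI[of _ 1400], rule exI[of _ 6], intro allI impI)
  subgoal premises positive for k n
  proof -
    \<comment> \<open>The construction does not need \<open>0 < k\<close>.\<close>
    interpret uniform_sampler n k using positive(2) by unfold_locales
    show ?thesis
      using rational_pwl_sampler dim11_sampler relu_only_sampler size_sampler
        measure_in_range measure_cells_ge measure_level_set measure_cell_ge measure_cell_le
      by (intro exI[of _ sampler]) auto
  qed
  done

end
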